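(* Let $\omega=[\mathbf a,\mathbf b]\subseteq[1,\infty)$ with $\mathbf a<\mathbf b$, and let $0<\delta<1$, $\Delta=(-\delta,\delta)$. Let $n\ge0$ and suppose the sequences $\mathbf a_k,\mathbf b_k,\mathbf c_k,\mathbf f_k,\mathbf d_k$ (described in the context) have been constructed for $0\le k\le n+1$ such that for every $0\le k\le n$: $0\notin\mathbf c_{k+1}$, $\mathbf a_{k+1}\cap\mathbf b_{k+1}=\emptyset$, $0\notin\mathbf f_{k+1}$, and, for every $0\le k\le n-1$, the interior of $\overline{\omega_{k+1}}$ is disjoint from $\Delta$. (These are exactly the checks passed whenever the iteration procedure reports step $n+1$.) Then $c_{n+1}(\mathbf a)\in\mathbf a_{n+1}$, $c_{n+1}(\mathbf b)\in\mathbf b_{n+1}$, $c'_{n+1}(\omega)\subseteq\mathbf c_{n+1}$, $(f^{n+1})'(\omega)\subseteq \mathbf f_{n+1}$, $\big(c'_{n+1}/(f^{n+1})'\big)(\omega)\subseteq\mathbf d_{n+1}$, and $\underline{\omega_{n+1}}\subseteq\omega_{n+1}\subseteq\overline{\omega_{n+1}}$.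
   Context: For a real parameter $a$ let $f_a(x)=a-x^2$. Define $c_0(a)=a$ and $c_{k+1}(a)=f_a(c_k(a))$ for $k\ge0$. For a parameter interval $\omega$ let $\omega_k:=\{c_k(a):a\in\omega\}$. Here $c_k'(a)$ denotes the derivative of $a\mapsto c_k(a)$ with respect to $a$, and $(f_a^k)'(c_0(a))$ the $x$-derivative of $f_a^k$ at $x=c_0(a)$ (with $f_a^0=\mathrm{id}$). Write $c_k'(\omega)=\{c_k'(a):a\in\omega\}$, $(f^k)'(\omega)=\{(f_a^k)'(c_0(a)):a\in\omega\}$, $\big(c_k'/(f^k)'\big)(\omega)=\{c_k'(a)/(f_a^k)'(c_0(a)):a\in\omega\}$. An interval $[x^-,x^+]$ has definite sign if $0\notin[x^-,x^+]$. For intervals $x,y$ let $g^-(x,y)=\min\{-2uv:u\in x,v\in y\}$, $g^+(x,y)=\max\{-2uv:u\in x,v\in y\}$. Construction. Real numbers $\mathbf a_k^\pm,\mathbf b_k^\pm,\mathbf c_k^\pm,\mathbf f_k^\pm,\mathbf d_k^\pm$ define intervals $\mathbf a_k=[\mathbf a_k^-,\mathbf a_k^+]$, etc. Let $\overline{\omega_k}$ be the convex hull of $\mathbf a_k\cup\mathbf b_k$; if $\mathbf a_k\cap\mathbf b_k=\emptyset$, let $\underline{\omega_k}$ be $[\mathbf a_k^+,\mathbf b_k^-]$ if $\mathbf a_k^+<\mathbf b_k^-$ and $[\mathbf b_k^+,\mathbf a_k^-]$ otherwise. Initially $\mathbf a_0^\pm=\mathbf a$, $\mathbf b_0^\pm=\mathbf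 b$, $\mathbf c_0^\pm=\mathbf f_0^\pm=\mathbf d_0^\pm=1$. Given step $k$ with $0\notin\overline{\omega_k}$, step $k+1$ consists of any real numbers satisfying: if $\mathbf a_k^+<0$, $\mathbf a_{k+1}^-\le f_{\mathbf a}(\mathbf a_k^-)$, $\mathbf a_{k+1}^+\ge f_{\mathbf a}(\mathbf a_k^+)$, $\mathbf b_{k+1}^-\le f_{\mathbf b}(\mathbf b_k^-)$, $\mathbf b_{k+1}^+\ge f_{\mathbf b}(\mathbf b_k^+)$; otherwise $\mathbf a_{k+1}^-\le f_{\mathbf a}(\mathbf a_k^+)$, $\mathbf a_{k+1}^+\ge f_{\mathbf a}(\mathbf a_k^-)$, $\mathbf b_{k+1}^-\le f_{\mathbf b}(\mathbf b_k^+)$, $\mathbf b_{k+1}^+\ge f_{\mathbf b}(\mathbf b_k^-)$; $\mathbf c_{k+1}^-\le 1+g^-(\mathbf c_k,\overline{\omega_k})$, $\mathbf c_{k+1}^+\ge 1+g^+(\mathbf c_k,\overline{\omega_k})$; $\mathbf f_{k+1}^-\le g^-(\mathbf f_k,\overline{\omega_k})$, $\mathbf f_{k+1}^+\ge g^+(\mathbf f_k,\overline{\omega_k})$; and, when $\mathbf f_{k+1}$ has definite sign, $\mathbf d_{k+1}^-\le \mathbf d_k^-+1/\mathbf f_{k+1}^+$, $\mathbf d_{k+1}^+\ge\mathbf d_k^++1/\mathbf f_{k+1}^-$. *)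

theory Defs
  imports "HOL-Analysis.Analysis"
begin

definition fa :: "real \<Rightarrow> real \<Rightarrow> real" where
  "fa a x = a - x\<^sup>2"

fun cseq :: "nat \<Rightarrow> real \<Rightarrow> real" where
  "cseq 0 a = a"
| "cseq (Suc k) a = fa a (cseq k a)"

definition gmin :: "real set \<Rightarrow> real set \<Rightarrow> real" where
  "gmin X Y = Inf {-2 * u * v | u v. u \<in> X \<and> v \<in> Y}"

definition gmax :: "real set \<Rightarrow> real set \<Rightarrow> real" where
  "gmax X Y = Sup {-2 * u * v | u v. u \<in> X \<and> v \<in> Y}"

definition ohull :: "real \<Rightarrow> real \<Rightarrow> real \<Rightarrow> real \<Rightarrow> real set" where
  "ohull aL aU bL bU = convex hull ({aL..aU} \<union> {bL..bU})"

text \<open>Lower hull (meaningful when the intervals a_k, b_k are disjoint).\<close>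
definition uhull :: "real \<Rightarrow> real \<Rightarrow> real \<Rightarrow> real \<Rightarrow> real set" where
  "uhull aL aU bL bU = (if aU < bL then {aU..bL} else {bU..aL})"

definition step_ok ::
  "real \<Rightarrow> real \<Rightarrow> (nat \<Rightarrow> real) \<Rightarrow> (nat \<Rightarrow> real) \<Rightarrow> (nat \<Rightarrow> real) \<Rightarrow> (nat \<Rightarrow> real) \<Rightarrow>
   (nat \<Rightarrow> real) \<Rightarrow> (nat \<Rightarrow> real) \<Rightarrow> (nat \<Rightarrow> real) \<Rightarrow> (nat \<Rightarrow> real) \<Rightarrow>
   (nat \<Rightarrow> real) \<Rightarrow> (nat \<Rightarrow> real) \<Rightarrow> nat \<Rightarrow> bool" where
  "step_ok a b aL aU bL bU cL cU fL fU dL dU k \<longleftrightarrow>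
     (let W = ohull (aL k) (aU k) (bL k) (bU k) in
       (if aU k < 0 then
          aL (Suc k) \<le> fa a (aL k) \<and> aU (Suc k) \<ge> fa a (aU k) \<and>
          bL (Suc k) \<le> fa b (bL k) \<and> bU (Suc k) \<ge> fa b (bU k)
        else
          aL (Suc k) \<le> fa a (aU k) \<and> aU (Suc k) \<ge> fa a (aL k) \<and>
          bL (Suc k) \<le> fa b (bU k) \<and> bU (Suc k) \<ge> fa b (bL k)) \<and>
       cL (Suc k) \<le> 1 + gmin {cL k..cU k} W \<and> cU (Suc k) \<ge> 1 + gmax {cL k..cU k} W \<and>
       fL (Suc k) \<le> gmin {fL k..fU k} W \<and> fU (Suc k) \<ge> gmax {fL k..fU k} W \<and>
       (0 \<notin> {fL (Suc k)..fU (Suc k)} \<longrightarrow>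
          dL (Suc k) \<le> dL k + 1 / fU (Suc k) \<and> dU (Suc k) \<ge> dU k + 1 / fL (Suc k)))"

end

theory Submission
  imports Defs
begin

text \<open>
Since 0 lies outside the hull of a_k and b_k, all critical values c_k(a), a in omega,
stay on one side of 0, where x \<mapsto> a - x^2 is monotone; this carries the endpoint enclosures
forward. Differentiating the recursion gives c'_(k+1) = 1 - 2 c_k c'_k and
(f^(k+1))' = -2 c_k (f^k)', whose products are bounded by g^- and g^+, and the quotient satisfies
c'_(k+1)/(f^(k+1))' = 1/(f^(k+1))' + c'_k/(f^k)', which is the update of d_k. Finally c'_k has a
definite sign on omega, so c_k is monotone there and omega_k is the interval between
c_k(a) in a_k and c_k(b) in b_k: it contains the gap between a_k and b_k and lies in their hull.
\<close>

fun cseq_deriv :: "nat \<Rightarrow> real \<Rightarrow> real" where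
  "cseq_deriv 0 x = 1"
| "cseq_deriv (Suc k) x = 1 - 2 * cseq k x * cseq_deriv k x"

fun fa_iter_deriv :: "real \<Rightarrow> nat \<Rightarrow> real \<Rightarrow> real" where
  "fa_iter_deriv x 0 y = 1"
| "fa_iter_deriv x (Suc k) y = -2 * (fa x ^^ k) y * fa_iter_deriv x k y"

lemma cseq_has_real_derivative: "(cseq k has_real_derivative cseq_deriv k x) (at x)"
proof (induction k)
  case 0
  then show ?case by (auto intro!: derivative_eq_intros)
next
  case (Suc k)
  have "cseq (Suc k) = (\<lambda>x. x - (cseq k x)\<^sup>2)"
    by (auto simp: fa_def)
  then show ?case
    using Suc by (auto intro!: derivative_eq_intros simp: algebra_simps)
qed

lemma fa_iter_has_real_derivative: "((fa x ^^ k) has_real_derivative fa_iter_deriv x k y) (at y)"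
proof (induction k arbitrary: y)
  case 0
  then show ?case by (auto intro!: derivative_eq_intros)
next
  case (Suc k)
  have "fa x ^^ Suc k = (\<lambda>y. x - ((fa x ^^ k) y)\<^sup>2)"
    by (auto simp: fa_def)
  then show ?case
    using Suc by (auto intro!: derivative_eq_intros simp: algebra_simps)
qed

lemma fa_iter_at_param: "(fa x ^^ k) x = cseq k x"
  by (induction k) auto

lemma fa_iter_deriv_Suc_at_param:
  "fa_iter_deriv x (Suc k) x = -2 * cseq k x * fa_iter_deriv x k x"
  by (simp add: fa_iter_at_param)

lemma cseq_deriv_div_fa_iter_deriv_Suc:
  assumes "fa_iter_deriv x k x \<noteq> 0" and "cseq k x \<noteq> 0"
  shows "cseq_deriv (Suc k) x / fa_iter_deriv x (Suc k) x
           = 1 / fa_iter_deriv x (Suc k) x + cseq_deriv k x / fa_iter_deriv x k x"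
  unfolding fa_iter_deriv_Suc_at_param using assms by (simp add: field_simps)

lemma gmin_gmax_bounds:
  fixes X Y :: "real set"
  assumes "bounded X" "bounded Y" "u \<in> X" "v \<in> Y"
  shows "gmin X Y \<le> -2 * u * v" "-2 * u * v \<le> gmax X Y"
proof -
  obtain B1 where B1: "\<forall>x\<in>X. \<bar>x\<bar> \<le> B1" using assms(1) bounded_real by blast
  obtain B2 where B2: "\<forall>y\<in>Y. \<bar>y\<bar> \<le> B2" using assms(2) bounded_real by blast
  let ?S = "{-2 * u * v | u v. u \<in> X \<and> v \<in> Y}"
  have "\<bar>s\<bar> \<le> 2 * B1 * B2" if "s \<in> ?S" for s
  proof -
    obtain p q where pq: "s = -2 * p * q" "p \<in> X" "q \<in> Y" using \<open>s \<in> ?S\<close> by blast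
    have "\<bar>p\<bar> * \<bar>q\<bar> \<le> B1 * B2"
      using B1 B2 pq by (meson abs_ge_zero mult_mono order_trans)
    then show ?thesis using pq by (simp add: abs_mult)
  qed
  then have S: "bounded ?S" using bounded_real by blast
  have uv: "-2 * u * v \<in> ?S" using assms by blast
  show "gmin X Y \<le> -2 * u * v" "-2 * u * v \<le> gmax X Y"
    unfolding gmin_def gmax_def
    by (rule cInf_lower[OF uv bounded_imp_bdd_below[OF S]],
        rule cSup_upper[OF uv bounded_imp_bdd_above[OF S]])
qed

lemma inverse_mem_interval:
  fixes l u y :: real
  assumes "0 \<notin> {l..u}" "y \<in> {l..u}"
  shows "1 / y \<in> {1 / u..1 / l}"
proof -
  have "0 < l \<or> u < 0" using assms by auto
  then show ?thesis using assms by (auto simp: divide_simps)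
qed

lemma fa_mem_interval_neg:
  assumes "x \<in> {l..u}" "u < 0"
  shows "fa c x \<in> {fa c l..fa c u}"
proof -
  have "(-u)\<^sup>2 \<le> (-x)\<^sup>2" "(-x)\<^sup>2 \<le> (-l)\<^sup>2"
    by (rule power_mono; use assms in auto)+
  then show ?thesis by (simp add: fa_def)
qed

lemma fa_mem_interval_nonneg:
  assumes "x \<in> {l..u}" "0 \<le> l"
  shows "fa c x \<in> {fa c u..fa c l}"
proof -
  have "l\<^sup>2 \<le> x\<^sup>2" "x\<^sup>2 \<le> u\<^sup>2"
    by (rule power_mono; use assms in auto)+
  then show ?thesis by (simp add: fa_def)
qed

lemma connected_nonzero_same_sign:
  fixes W :: "real set"
  assumes "connected W" "0 \<notin> W" "p \<in> W" "q \<in> W" "p < 0"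
  shows "q < 0"
proof (rule ccontr)
  assume "\<not> q < 0"
  then have "0 \<in> {p..q}" using assms(5) by auto
  then show False using connected_contains_Icc[OF assms(1,3,4)] assms(2) by blast
qed

lemma ohull_contains_between:
  assumes "p \<in> {aL..aU}" "q \<in> {bL..bU}" "y \<in> {min p q..max p q}"
  shows "y \<in> ohull aL aU bL bU"
proof -
  have P: "p \<in> ohull aL aU bL bU" and Q: "q \<in> ohull aL aU bL bU"
    using assms(1,2) hull_subset unfolding ohull_def by fastforce+
  have conn: "connected (ohull aL aU bL bU)"
    unfolding ohull_def by (simp add: convex_connected)
  show ?thesis
    using connected_contains_Icc[OF conn P Q] connected_contains_Icc[OF conn Q P] assms(3)
    by (cases "p \<le> q") (auto simp: min_def max_def)
qed

lemma mem_between_endpoints_if_deriv_definite_sign: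
  fixes f f' :: "real \<Rightarrow> real"
  assumes "\<And>x. (f has_real_derivative f' x) (at x)"
    and "\<forall>x\<in>{a..b}. f' x \<in> {l..u}" "0 \<notin> {l..u}" "x \<in> {a..b}"
  shows "f x \<in> {min (f a) (f b)..max (f a) (f b)}"
proof (cases "0 < l")
  case True
  then have nonneg: "0 \<le> f' y" if "y \<in> {a..b}" for y
    using assms(2) that by fastforce
  have "f a \<le> f x" "f x \<le> f b"
    by (rule deriv_nonneg_imp_mono[OF assms(1)]; use nonneg assms(4) in auto)+
  then show ?thesis by auto
next
  case False
  then have nonpos: "f' y \<le> 0" if "y \<in> {a..b}" for y
    using assms(2,3) that by fastforce
  have "f x \<le> f a" "f b \<le> f x"
    by (rule deriv_nonpos_imp_antimono[OF assms(1)]; use nonpos assms(4) in auto)+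
  then show ?thesis by auto
qed

locale enclosures =
  fixes a b :: real and aL aU bL bU cL cU fL fU dL dU :: "nat \<Rightarrow> real"
begin

abbreviation upper_hull :: "nat \<Rightarrow> real set" where
  "upper_hull k \<equiv> ohull (aL k) (aU k) (bL k) (bU k)"

definition encloses :: "nat \<Rightarrow> bool" where
  "encloses k \<longleftrightarrow> cseq k a \<in> {aL k..aU k} \<and> cseq k b \<in> {bL k..bU k} \<and>
     (\<forall>x\<in>{a..b}. cseq_deriv k x \<in> {cL k..cU k} \<and> fa_iter_deriv x k x \<in> {fL k..fU k} \<and>
        cseq_deriv k x / fa_iter_deriv x k x \<in> {dL k..dU k})"

lemma cseq_image_subset_upper_hull:
  assumes "encloses k" "0 \<notin> {cL k..cU k}"
  shows "cseq k ` {a..b} \<subseteq> upper_hull k"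
proof (rule image_subsetI)
  fix x assume x: "x \<in> {a..b}"
  have ca: "cseq k a \<in> {aL k..aU k}" and cb: "cseq k b \<in> {bL k..bU k}"
    and deriv_in: "\<forall>y\<in>{a..b}. cseq_deriv k y \<in> {cL k..cU k}"
    using assms(1) by (auto simp: encloses_def)
  show "cseq k x \<in> upper_hull k"
    using mem_between_endpoints_if_deriv_definite_sign[OF cseq_has_real_derivative deriv_in assms(2) x]
      ohull_contains_between[OF ca cb] by blast
qed

lemma lower_hull_subset_cseq_image:
  assumes "a \<le> b" "encloses k" "{aL k..aU k} \<inter> {bL k..bU k} = {}"
  shows "uhull (aL k) (aU k) (bL k) (bU k) \<subseteq> cseq k ` {a..b}"
proof -
  have ca: "cseq k a \<in> {aL k..aU k}" and cb: "cseq k b \<in> {bL k..bU k}"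
    using assms(2) by (auto simp: encloses_def)
  have conn: "connected (cseq k ` {a..b})"
    by (intro connected_continuous_image connected_Icc continuous_at_imp_continuous_on
        ballI DERIV_isCont[OF cseq_has_real_derivative])
  have A: "cseq k a \<in> cseq k ` {a..b}" and B: "cseq k b \<in> cseq k ` {a..b}"
    using assms(1) by auto
  have between: "{min (cseq k a) (cseq k b)..max (cseq k a) (cseq k b)} \<subseteq> cseq k ` {a..b}"
    using connected_contains_Icc[OF conn A B] connected_contains_Icc[OF conn B A]
    by (cases "cseq k a \<le> cseq k b") (auto simp: min_def max_def)
  have "aU k < bL k \<or> bU k < aL k"
  proof (rule ccontr)
    assume "\<not> (aU k < bL k \<or> bU k < aL k)"
    then have "max (aL k) (bL k) \<in> {aL k..aU k} \<inter> {bL k..bU k}"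
      using ca cb by (auto simp: max_def)
    with assms(3) show False by blast
  qed
  then show ?thesis
    using ca cb between by (auto simp: uhull_def)
qed

lemma endpoints_encloses_Suc:
  assumes "encloses k" "0 \<notin> upper_hull k"
    and "step_ok a b aL aU bL bU cL cU fL fU dL dU k"
  shows "cseq (Suc k) a \<in> {aL (Suc k)..aU (Suc k)} \<and> cseq (Suc k) b \<in> {bL (Suc k)..bU (Suc k)}"
proof -
  have ca: "cseq k a \<in> {aL k..aU k}" and cb: "cseq k b \<in> {bL k..bU k}"
    using assms(1) by (auto simp: encloses_def)
  have in_hull: "aL k \<in> upper_hull k" "aU k \<in> upper_hull k" "bL k \<in> upper_hull k" "bU k \<in> upper_hull k"
    using ca cb hull_subset unfolding ohull_def by fastforce+
  have conn: "connected (upper_hull k)"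
    unfolding ohull_def by (simp add: convex_connected)
  show ?thesis
  proof (cases "aU k < 0")
    case True
    then have "bU k < 0"
      using connected_nonzero_same_sign[OF conn assms(2) in_hull(2,4)] by blast
    then show ?thesis
      using assms(3) True fa_mem_interval_neg[OF ca True, of a] fa_mem_interval_neg[OF cb, of b]
      by (auto simp: step_ok_def Let_def)
  next
    case False
    moreover have "aU k \<noteq> 0" using in_hull(2) assms(2) by auto
    moreover have "aL k < 0 \<Longrightarrow> aU k < 0" "bL k < 0 \<Longrightarrow> aU k < 0"
      using connected_nonzero_same_sign[OF conn assms(2) in_hull(1,2)]
        connected_nonzero_same_sign[OF conn assms(2) in_hull(3,2)] by blast+
    ultimately have "0 \<le> aL k" "0 \<le> bL k" by linarith+
    then show ?thesis
      using assms(3) False fa_mem_interval_nonneg[OF ca, of a] fa_mem_interval_nonneg[OF cb, of b]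
      by (auto simp: step_ok_def Let_def)
  qed
qed

lemma derivatives_encloses_Suc:
  assumes "encloses k" "0 \<notin> upper_hull k"
    and "step_ok a b aL aU bL bU cL cU fL fU dL dU k"
    and "0 \<notin> {cL k..cU k}" "0 \<notin> {fL k..fU k}" "0 \<notin> {fL (Suc k)..fU (Suc k)}"
    and x: "x \<in> {a..b}"
  shows "cseq_deriv (Suc k) x \<in> {cL (Suc k)..cU (Suc k)} \<and>
         fa_iter_deriv x (Suc k) x \<in> {fL (Suc k)..fU (Suc k)} \<and>
         cseq_deriv (Suc k) x / fa_iter_deriv x (Suc k) x \<in> {dL (Suc k)..dU (Suc k)}"
proof -
  have c_hull: "cseq k x \<in> upper_hull k"
    using cseq_image_subset_upper_hull[OF assms(1,4)] x by blast
  have bd: "bounded (upper_hull k)"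
    unfolding ohull_def by (intro bounded_convex_hull) auto
  have dc: "cseq_deriv k x \<in> {cL k..cU k}" and df: "fa_iter_deriv x k x \<in> {fL k..fU k}"
    and dd: "cseq_deriv k x / fa_iter_deriv x k x \<in> {dL k..dU k}"
    using assms(1) x by (auto simp: encloses_def)
  have C: "cseq_deriv (Suc k) x \<in> {cL (Suc k)..cU (Suc k)}"
    using assms(3) gmin_gmax_bounds[OF _ bd dc c_hull]
    by (auto simp: step_ok_def Let_def algebra_simps)
  have F: "fa_iter_deriv x (Suc k) x \<in> {fL (Suc k)..fU (Suc k)}"
    unfolding fa_iter_deriv_Suc_at_param using assms(3) gmin_gmax_bounds[OF _ bd df c_hull]
    by (auto simp: step_ok_def Let_def algebra_simps)
  have "cseq_deriv (Suc k) x / fa_iter_deriv x (Suc k) x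
          = 1 / fa_iter_deriv x (Suc k) x + cseq_deriv k x / fa_iter_deriv x k x"
    using assms(2,5) c_hull df by (intro cseq_deriv_div_fa_iter_deriv_Suc) auto
  moreover have "dL (Suc k) \<le> dL k + 1 / fU (Suc k) \<and> dU k + 1 / fL (Suc k) \<le> dU (Suc k)"
    using assms(3,6) by (auto simp: step_ok_def Let_def)
  ultimately have "cseq_deriv (Suc k) x / fa_iter_deriv x (Suc k) x \<in> {dL (Suc k)..dU (Suc k)}"
    using inverse_mem_interval[OF assms(6) F] dd by auto
  with C F show ?thesis by blast
qed

lemma encloses_Suc:
  assumes "encloses k" "0 \<notin> upper_hull k"
    and "step_ok a b aL aU bL bU cL cU fL fU dL dU k"
    and "0 \<notin> {cL k..cU k}" "0 \<notin> {fL k..fU k}" "0 \<notin> {fL (Suc k)..fU (Suc k)}"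
  shows "encloses (Suc k)"
  using endpoints_encloses_Suc[OF assms(1-3)] derivatives_encloses_Suc[OF assms]
  by (simp add: encloses_def)

end

theorem corollary6p1:
  fixes a b \<delta> :: real and n :: nat
    and aL aU bL bU cL cU fL fU dL dU :: "nat \<Rightarrow> real"
  assumes "1 \<le> a" and "a < b"
    and "0 < \<delta>" and "\<delta> < 1"
    and "aL 0 = a" "aU 0 = a" "bL 0 = b" "bU 0 = b"
    and "cL 0 = 1" "cU 0 = 1" "fL 0 = 1" "fU 0 = 1" "dL 0 = 1" "dU 0 = 1"
    and "\<forall>k\<le>n. 0 \<notin> ohull (aL k) (aU k) (bL k) (bU k)"
    and "\<forall>k\<le>n. step_ok a b aL aU bL bU cL cU fL fU dL dU k"
    and "\<forall>k\<le>n. 0 \<notin> {cL (Suc k)..cU (Suc k)}"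
    and "\<forall>k\<le>n. {aL (Suc k)..aU (Suc k)} \<inter> {bL (Suc k)..bU (Suc k)} = {}"
    and "\<forall>k\<le>n. 0 \<notin> {fL (Suc k)..fU (Suc k)}"
    and "\<forall>k. k + 1 \<le> n \<longrightarrow>
           interior (ohull (aL (Suc k)) (aU (Suc k)) (bL (Suc k)) (bU (Suc k)))
             \<inter> {-\<delta><..<\<delta>} = {}"
  shows "cseq (Suc n) a \<in> {aL (Suc n)..aU (Suc n)} \<and>
         cseq (Suc n) b \<in> {bL (Suc n)..bU (Suc n)} \<and>
         (\<lambda>x. deriv (cseq (Suc n)) x) ` {a..b} \<subseteq> {cL (Suc n)..cU (Suc n)} \<and>
         (\<lambda>x. deriv (fa x ^^ Suc n) (cseq 0 x)) ` {a..b} \<subseteq> {fL (Suc n)..fU (Suc n)} \<and>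
         (\<lambda>x. deriv (cseq (Suc n)) x / deriv (fa x ^^ Suc n) (cseq 0 x)) ` {a..b}
           \<subseteq> {dL (Suc n)..dU (Suc n)} \<and>
         uhull (aL (Suc n)) (aU (Suc n)) (bL (Suc n)) (bU (Suc n)) \<subseteq> cseq (Suc n) ` {a..b} \<and>
         cseq (Suc n) ` {a..b} \<subseteq> ohull (aL (Suc n)) (aU (Suc n)) (bL (Suc n)) (bU (Suc n))"
proof -
  interpret enclosures a b aL aU bL bU cL cU fL fU dL dU .
  have c_nonzero: "0 \<notin> {cL k..cU k}" and f_nonzero: "0 \<notin> {fL k..fU k}" if "k \<le> Suc n" for k
    using that assms(9-12,17,19) by (cases k; auto)+
  have "encloses k" if "k \<le> Suc n" for k
    using that
  proof (induction k)
    case 0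
    then show ?case using assms(5-14) by (simp add: encloses_def)
  next
    case (Suc k)
    then show ?case using assms(15,16) c_nonzero f_nonzero by (auto intro!: encloses_Suc)
  qed
  then have E: "encloses (Suc n)" by simp
  have dc: "deriv (cseq (Suc n)) x = cseq_deriv (Suc n) x" for x
    by (rule DERIV_imp_deriv[OF cseq_has_real_derivative])
  have df: "deriv (fa x ^^ Suc n) (cseq 0 x) = fa_iter_deriv x (Suc n) x" for x
    unfolding cseq.simps(1) by (rule DERIV_imp_deriv[OF fa_iter_has_real_derivative])
  have "{aL (Suc n)..aU (Suc n)} \<inter> {bL (Suc n)..bU (Suc n)} = {}"
    using assms(18) by blast
  then have "uhull (aL (Suc n)) (aU (Suc n)) (bL (Suc n)) (bU (Suc n)) \<subseteq> cseq (Suc n) ` {a..b}"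
    using lower_hull_subset_cseq_image[OF _ E] assms(2) by simp
  then show ?thesis
    using E cseq_image_subset_upper_hull[OF E c_nonzero]
    unfolding dc df encloses_def image_subset_iff by blast
qed

end
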